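(* Let $\theta>1$ be real and $n$ a positive integer. Then either $M'_\theta(n)=\lfloor n/\log\theta-1/2\rfloor$ or $M'_\theta(n)=\lfloor n/\log\theta+1/2\rfloor$. Moreover, $M'_\theta(n)=\lfloor n/\log\theta+1/2\rfloor$ if and only if \[\frac12-f\!\left(\frac{\log\theta}{n}\right)\leq \left\{\frac{n}{\log\theta}\right\}<\frac12.\]
   Context: $\lfloor x\rfloor$ is the floor and $\{x\}=x-\lfloor x\rfloor$ the fractional part; $\log$ is the natural logarithm. $M'_\theta(n)=\left\lfloor 1/(\theta^{1/n}-1)\right\rfloor$. For $t>0$, $f(t)=\frac{1}{e^t-1}-\frac1t+\frac12$. *)

theory Defs
  imports Complex_Main
begin

definition M' :: "real \<Rightarrow> nat \<Rightarrow> int" where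
  "M' \<theta> n = \<lfloor>1 / (\<theta> powr (1 / real n) - 1)\<rfloor>"

definition f :: "real \<Rightarrow> real" where
  "f t = 1 / (exp t - 1) - 1 / t + 1 / 2"

end

theory Submission
  imports Defs
begin

(* Put t = ln \<theta> / n and x = n / ln \<theta> = 1/t.  Since \<theta> powr (1/n) = exp t,
   the definition of f gives the exact identity
       1 / (\<theta> powr (1/n) - 1) = x - 1/2 + f t,
   so M'_\<theta>(n) = \<lfloor>x - 1/2 + f t\<rfloor>.  The analytic input is the bound 0 < f t < 1/2 for t > 0:
   the upper bound is exp t - 1 > t, the lower bound is (2 - t) exp t < 2 + t, proved by
   monotonicity since the derivative of (2 + s) - (2 - s) exp s is 1 - (1 - s) exp s > 0.
   The theorem then follows from a purely arithmetical fact about floors: for 0 \<le> \<delta> \<le> 1/2,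
   \<lfloor>x - 1/2 + \<delta>\<rfloor> is one of \<lfloor>x - 1/2\<rfloor>, \<lfloor>x + 1/2\<rfloor>, and it is the latter exactly when
   1/2 - \<delta> \<le> {x} < 1/2.
   The file proves the two bounds on f, the floor lemma and the identity for M', and
   combines them in the main theorem. *)

text \<open>The tangent line of exp at 0 lies strictly below it, written in the form used for
  the derivative below: \<open>(1 - s) e^s < 1\<close> for \<open>s \<noteq> 0\<close>.\<close>

lemma one_minus_times_exp_less_one:
  fixes s :: real
  assumes "s \<noteq> 0"
  shows "(1 - s) * exp s < 1"
proof -
  have "1 - s < exp (- s)" using exp_minus_greater assms by blast
  hence "(1 - s) * exp s < exp (- s) * exp s" by (simp add: mult_strict_right_mono)
  also have "\<dots> = 1" by (simp add: exp_minus field_simps)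
  finally show ?thesis .
qed

text \<open>The inequality \<open>(2 - t) e^t < 2 + t\<close> for \<open>t > 0\<close> (equivalently \<open>tanh (t/2) < t/2\<close>);
  it is the lower bound \<open>f t > 0\<close> after clearing denominators.\<close>

lemma two_minus_times_exp_less:
  fixes t :: real
  assumes "0 < t"
  shows "(2 - t) * exp t < 2 + t"
proof -
  let ?h = "\<lambda>s::real. (2 + s) - (2 - s) * exp s"
  have "?h 0 < ?h t"
  proof (rule DERIV_pos_imp_increasing_open[OF assms])
    show "continuous_on {0..t} ?h" by (intro continuous_intros)
  next
    fix s :: real assume "0 < s" "s < t"
    have "(?h has_real_derivative (1 - (1 - s) * exp s)) (at s)"
      by (auto intro!: derivative_eq_intros simp: algebra_simps)
    moreover have "0 < 1 - (1 - s) * exp s"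
      using one_minus_times_exp_less_one[of s] \<open>0 < s\<close> by simp
    ultimately show "\<exists>y. (?h has_real_derivative y) (at s) \<and> 0 < y" by blast
  qed
  thus ?thesis by simp
qed

lemma f_pos_less_half:
  fixes t :: real
  assumes "0 < t"
  shows "0 < f t" and "f t < 1/2"
proof -
  have exp_gt: "t < exp t - 1"
    using exp_minus_greater[of "- t"] assms by simp
  hence exp_pos: "0 < exp t - 1" using assms by simp
  have "1 / (exp t - 1) < 1 / t"
    using exp_gt assms by (simp add: divide_strict_left_mono)
  thus "f t < 1/2" unfolding f_def by simp
  have "(2 - t) * (exp t - 1) < 2 * t"
    using two_minus_times_exp_less[OF assms] by (simp add: algebra_simps)
  hence "(2 - t) / (2 * t) < 1 / (exp t - 1)"
    using exp_pos assms by (simp add: field_simps)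
  moreover have "1 / t - 1/2 = (2 - t) / (2 * t)"
    using assms by (simp add: field_simps)
  ultimately show "0 < f t" unfolding f_def by simp
qed

lemma floor_shifted_half:
  fixes x \<delta> :: real
  assumes "0 \<le> \<delta>" and "\<delta> \<le> 1/2"
  shows "(\<lfloor>x - 1/2 + \<delta>\<rfloor> = \<lfloor>x - 1/2\<rfloor> \<or> \<lfloor>x - 1/2 + \<delta>\<rfloor> = \<lfloor>x + 1/2\<rfloor>) \<and>
         (\<lfloor>x - 1/2 + \<delta>\<rfloor> = \<lfloor>x + 1/2\<rfloor> \<longleftrightarrow> 1/2 - \<delta> \<le> frac x \<and> frac x < 1/2)"
proof -
  define k where "k = \<lfloor>x\<rfloor>"
  define r where "r = frac x"
  have x_eq: "x = k + r" unfolding k_def r_def frac_def by simp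
  have r_range: "0 \<le> r" "r < 1" unfolding r_def by (auto simp: frac_lt_1)
  show ?thesis
  proof (cases "r < 1/2")
    case True
    have "\<lfloor>x - 1/2\<rfloor> = k - 1" "\<lfloor>x + 1/2\<rfloor> = k"
      unfolding x_eq using True r_range by linarith+
    thus ?thesis unfolding r_def[symmetric] unfolding x_eq using True r_range assms by linarith
  next
    case False
    have "\<lfloor>x - 1/2\<rfloor> = k" "\<lfloor>x + 1/2\<rfloor> = k + 1"
      unfolding x_eq using False r_range by linarith+
    thus ?thesis unfolding r_def[symmetric] unfolding x_eq using False r_range assms by linarith
  qed
qed

lemma M'_eq_floor_f:
  fixes \<theta> :: real and n :: nat
  assumes "\<theta> > 1" and "n \<ge> 1"
  shows "M' \<theta> n = \<lfloor>real n / ln \<theta> - 1/2 + f (ln \<theta> / real n)\<rfloor>"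
proof -
  define t where "t = ln \<theta> / real n"
  have "\<theta> powr (1 / real n) = exp t"
    using assms unfolding powr_def t_def by simp
  moreover have "1 / (exp t - 1) = real n / ln \<theta> - 1/2 + f t"
    unfolding f_def t_def by simp
  ultimately show ?thesis unfolding M'_def t_def by simp
qed

theorem mainTheorem9:
  fixes \<theta> :: real and n :: nat
  assumes "\<theta> > 1" and "n \<ge> 1"
  shows "(M' \<theta> n = \<lfloor>real n / ln \<theta> - 1/2\<rfloor> \<or> M' \<theta> n = \<lfloor>real n / ln \<theta> + 1/2\<rfloor>) \<and>
         (M' \<theta> n = \<lfloor>real n / ln \<theta> + 1/2\<rfloor> \<longleftrightarrow>
            (1/2 - f (ln \<theta> / real n) \<le> frac (real n / ln \<theta>) \<and> frac (real n / ln \<theta>) < 1/2))"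
proof -
  have "0 < ln \<theta> / real n" using assms by simp
  hence "0 \<le> f (ln \<theta> / real n)" "f (ln \<theta> / real n) \<le> 1/2"
    using f_pos_less_half by (auto simp: less_imp_le)
  from floor_shifted_half[OF this, of "real n / ln \<theta>"]
  show ?thesis unfolding M'_eq_floor_f[OF assms] .
qed

end
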